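(* In the setting of the context (with $B\sim_{\mathbb Q}2\mathcal L$), let $N_{m,j}=\dim W_{m,j}$ and $N_m=\sum_{j=0}^{2m}N_{m,j}$. Let $a_{m,j}=j-m$ if $m<j\le 2m$ and $a_{m,j}=0$ otherwise, and set \[ a_m=\frac{1}{mN_m}\sum_{j=0}^{2m}N_{m,j}a_{m,j}. \] This is the coefficient of $B$ in the fixed part of any $m$-basis type $\mathbb Q$-divisor of $W_{\bullet,\bullet}$. Then \[ \lim_{m\to\infty}a_m=a(n,r):=\frac{r^{n+1}-(r-1)^{n+1}-(n+1)(r-1)^n}{2(n+1)(r^n-(r-1)^n)}. \]
   Context: Work over $\mathbb C$. $V$ is a smooth Fano variety of dimension $n-1\ge1$, $\mathcal L$ is an ample line bundle with $r\mathcal L\sim_{\mathbb Q}-K_V$ ($r>1$ rational), and $B\subset V$ is a smooth effective divisor with $B\sim_{\mathbb Q}2\mathcal L$. $X=\mathbb P_V(\mathcal L\oplus\mathcal O_V)$, with $\mathbb P^1$-bundle projection $\phi:X\to V$. It has two disjoint sections: $V_0$, with normal bundle $\mathcal L^{-1}$, and $V_\infty$, with normal bundle $\mathcal L$. $B_\infty\subset V_\infty$ is the image of $B$, $Y=\mathrm{Bl}_{B_\infty}X$, and $\overline V_\infty\cong V$ is the strict transform of $V_\infty$. For $m\ge1$, $j\ge0$, $W_{m,j}$ is the image of the restriction map $H^0(Y,-mK_Y-j\overline V_\infty)\to H^0(\overline V_\infty,(-mK_Y-j\overline V_\infty)|_{\overline V_\infty})$. Its movable part is $H^0(V,(mr-|m-j|)\mathcal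 L)$ for $0\le j\le 2m$, and $W_{m,j}=0$ for $j>2m$. An $m$-basis type $\mathbb Q$-divisor of $W_{\bullet,\bullet}$ is $\frac{1}{mN_m}\sum_j\Delta_{m,j}$, where each $\Delta_{m,j}$ is the sum of the divisors of a basis of $W_{m,j}$. *)

theory Defs
  imports Complex_Main
begin

text \<open>The geometry (V, L, B, X, Y) is abstracted through the function
  h t = dim H^0(V, t L) for real t \<ge> 0 (the dimension of the space of
  sections of the Q-line bundle t L), which is all the statement depends on:
  N_{m,j} = dim W_{m,j} = h(m r - |m - j|) for 0 \<le> j \<le> 2m and 0 for j > 2m.\<close>

definition Nmj :: "(real \<Rightarrow> nat) \<Rightarrow> real \<Rightarrow> nat \<Rightarrow> nat \<Rightarrow> nat" where
  "Nmj h r m j = (if j \<le> 2 * m then h (real m * r - \<bar>real m - real j\<bar>) else 0)"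

definition Nm :: "(real \<Rightarrow> nat) \<Rightarrow> real \<Rightarrow> nat \<Rightarrow> nat" where
  "Nm h r m = (\<Sum>j = 0..2 * m. Nmj h r m j)"

definition amj :: "nat \<Rightarrow> nat \<Rightarrow> real" where
  "amj m j = (if m < j \<and> j \<le> 2 * m then real j - real m else 0)"

definition am :: "(real \<Rightarrow> nat) \<Rightarrow> real \<Rightarrow> nat \<Rightarrow> real" where
  "am h r m = (1 / (real m * real (Nm h r m))) * (\<Sum>j = 0..2 * m. real (Nmj h r m j) * amj m j)"

definition a_lim :: "nat \<Rightarrow> real \<Rightarrow> real" where
  "a_lim n r = (r ^ (n + 1) - (r - 1) ^ (n + 1) - real (n + 1) * (r - 1) ^ n)
               / (2 * real (n + 1) * (r ^ n - (r - 1) ^ n))"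

end

theory Submission
  imports Defs
begin

text \<open>Write k = n - 1, so that N_{m,j} \<approx> c (m r - |m - j|)^k for large m, uniformly in j,
  because every argument m r - |m - j| is at least m (r - 1). Both sums defining a_m are then
  Riemann sums: after scaling by m^{k+1} and m^{k+2} they converge to multiples of the integrals
  of x^k and x^{k+1} over [r - 1, r], and a(n, r) is the quotient of the two limits.\<close>

definition power_integral :: "real \<Rightarrow> nat \<Rightarrow> real" where
  "power_integral r p = (r ^ Suc p - (r - 1) ^ Suc p) / real (Suc p)"

definition power_sum :: "real \<Rightarrow> nat \<Rightarrow> nat \<Rightarrow> real" where
  "power_sum r p m = (\<Sum>i\<le>m. (real m * r - real i) ^ p)"

lemma power_integral_pos:
  assumes "r > 1"
  shows "power_integral r p > 0"
proof -
  have "(r - 1) ^ Suc p < r ^ Suc p" using assms by (intro power_strict_mono) auto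
  then show ?thesis by (simp add: power_integral_def)
qed

lemma Suc_power_diff_bounds:
  fixes b :: real
  assumes "b \<ge> 0"
  shows "real (Suc p) * b ^ p \<le> (b + 1) ^ Suc p - b ^ Suc p"
    and "(b + 1) ^ Suc p - b ^ Suc p \<le> real (Suc p) * (b + 1) ^ p"
proof -
  have diff: "(b + 1) ^ Suc p - b ^ Suc p = (\<Sum>i<Suc p. b ^ (p - i) * (b + 1) ^ i)"
    using power_diff_sumr2[of "b + 1" "Suc p" b] by simp
  have "b ^ p \<le> b ^ (p - i) * (b + 1) ^ i" if "i \<le> p" for i
  proof -
    have "b ^ p = b ^ (p - i) * b ^ i" using that by (simp add: power_add[symmetric])
    also have "\<dots> \<le> b ^ (p - i) * (b + 1) ^ i"
      using assms by (intro mult_left_mono power_mono) auto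
    finally show ?thesis .
  qed
  then have "(\<Sum>i<Suc p. b ^ p) \<le> (\<Sum>i<Suc p. b ^ (p - i) * (b + 1) ^ i)"
    by (intro sum_mono) simp
  then show "real (Suc p) * b ^ p \<le> (b + 1) ^ Suc p - b ^ Suc p"
    unfolding diff by simp
  have "b ^ (p - i) * (b + 1) ^ i \<le> (b + 1) ^ p" if "i \<le> p" for i
  proof -
    have "b ^ (p - i) * (b + 1) ^ i \<le> (b + 1) ^ (p - i) * (b + 1) ^ i"
      using assms by (intro mult_right_mono power_mono) auto
    also have "\<dots> = (b + 1) ^ p" using that by (simp add: power_add[symmetric])
    finally show ?thesis .
  qed
  then have "(\<Sum>i<Suc p. b ^ (p - i) * (b + 1) ^ i) \<le> (\<Sum>i<Suc p. (b + 1) ^ p)"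
    by (intro sum_mono) simp
  then show "(b + 1) ^ Suc p - b ^ Suc p \<le> real (Suc p) * (b + 1) ^ p"
    unfolding diff by simp
qed

lemma power_sum_telescope:
  fixes r :: real
  shows "(\<Sum>i<m. (real m * r - real i) ^ Suc p - (real m * r - real (Suc i)) ^ Suc p)
          = real m ^ Suc p * (r ^ Suc p - (r - 1) ^ Suc p)"
proof -
  have "(\<Sum>i<m. (real m * r - real i) ^ Suc p - (real m * r - real (Suc i)) ^ Suc p)
        = (real m * r) ^ Suc p - (real m * (r - 1)) ^ Suc p"
    by (subst sum_lessThan_telescope') (simp add: algebra_simps)
  also have "\<dots> = real m ^ Suc p * (r ^ Suc p - (r - 1) ^ Suc p)"
    by (simp only: power_mult_distrib[symmetric] right_diff_distrib mult_1_right)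
  finally show ?thesis .
qed

lemma power_sum_bounds:
  fixes r :: real
  assumes "r \<ge> 1"
  shows "real m ^ Suc p * power_integral r p \<le> power_sum r p m"
    and "power_sum r p m \<le> real m ^ Suc p * power_integral r p + (real m * r) ^ p"
proof -
  define a where "a i = real m * r - real i" for i
  have a_Suc: "a i = a (Suc i) + 1" for i by (simp add: a_def)
  have a_nonneg: "a (Suc i) \<ge> 0" if "i < m" for i
  proof -
    have "real (Suc i) \<le> real m" using that by simp
    also have "\<dots> \<le> real m * r" using assms mult_left_mono[of 1 r "real m"] by simp
    finally show ?thesis by (simp add: a_def)
  qed
  have scaled: "real (Suc p) * (real m ^ Suc p * power_integral r p)
      = (\<Sum>i<m. a i ^ Suc p - a (Suc i) ^ Suc p)"
    using power_sum_telescope[of m r p] by (simp add: power_integral_def a_def del: of_nat_Suc)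
  have "real (Suc p) * (real m ^ Suc p * power_integral r p) \<le> real (Suc p) * (\<Sum>i<m. a i ^ p)"
    unfolding scaled sum_distrib_left
    by (intro sum_mono) (metis a_Suc Suc_power_diff_bounds(2) a_nonneg lessThan_iff)
  moreover have "a m ^ p \<ge> 0"
    using a_nonneg[of "m - 1"] by (cases m) (simp_all add: a_def)
  ultimately show "real m ^ Suc p * power_integral r p \<le> power_sum r p m"
    by (simp add: power_sum_def a_def[symmetric] lessThan_Suc_atMost[symmetric] del: of_nat_Suc)
  have "real (Suc p) * (\<Sum>i<m. a (Suc i) ^ p) \<le> real (Suc p) * (real m ^ Suc p * power_integral r p)"
    unfolding scaled sum_distrib_left
    by (intro sum_mono) (metis a_Suc Suc_power_diff_bounds(1) a_nonneg lessThan_iff)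
  then have "(\<Sum>i<m. a (Suc i) ^ p) \<le> real m ^ Suc p * power_integral r p"
    by (simp del: of_nat_Suc)
  moreover have "power_sum r p m = a 0 ^ p + (\<Sum>i<m. a (Suc i) ^ p)"
    unfolding power_sum_def a_def lessThan_Suc_atMost[symmetric] by (rule sum.lessThan_Suc_shift)
  ultimately show "power_sum r p m \<le> real m ^ Suc p * power_integral r p + (real m * r) ^ p"
    by (simp add: a_def)
qed

lemma tendsto_power_sum:
  fixes r :: real
  assumes "r \<ge> 1"
  shows "(\<lambda>m. power_sum r p m / real m ^ Suc p) \<longlonglongrightarrow> power_integral r p"
proof (rule tendsto_sandwich)
  show "\<forall>\<^sub>F m in sequentially. power_integral r p \<le> power_sum r p m / real m ^ Suc p"
    using eventually_gt_at_top[of "0::nat"]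
    by eventually_elim (use power_sum_bounds(1)[OF assms] in \<open>simp add: field_simps\<close>)
  have rest: "(real m * r) ^ p / real m ^ Suc p = r ^ p / real m" if "m > 0" for m
    using that by (simp add: power_mult_distrib)
  show "\<forall>\<^sub>F m in sequentially.
      power_sum r p m / real m ^ Suc p \<le> power_integral r p + r ^ p / real m"
    using eventually_gt_at_top[of "0::nat"]
    by eventually_elim (use power_sum_bounds(2)[OF assms] rest in \<open>simp add: field_simps\<close>)
  have "(\<lambda>m. power_integral r p + r ^ p / real m) \<longlonglongrightarrow> power_integral r p + 0"
    by (intro tendsto_add tendsto_const lim_const_over_n)
  then show "(\<lambda>m. power_integral r p + r ^ p / real m) \<longlonglongrightarrow> power_integral r p"
    by simp
qed simp

lemma sum_upper_half_shift:
  fixes g :: "nat \<Rightarrow> real"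
  shows "(\<Sum>j = m + 1..2 * m. g j) = (\<Sum>i = 1..m. g (i + m))"
proof -
  have "(\<Sum>j = m + 1..2 * m. g j) = (\<Sum>j = 1 + m..m + m. g j)"
    by (simp add: mult_2 add.commute)
  also have "\<dots> = (\<Sum>i = 1..m. g (i + m))"
    by (rule sum.shift_bounds_cl_nat_ivl)
  finally show ?thesis .
qed

lemma sum_split_halves:
  fixes g :: "nat \<Rightarrow> real"
  shows "(\<Sum>j = 0..2 * m. g j) = (\<Sum>j = 0..m. g j) + (\<Sum>j = m + 1..2 * m. g j)"
  unfolding mult_2 by (rule sum.ub_add_nat) simp

lemma sum_atLeast1_atMost_eq:
  fixes g :: "nat \<Rightarrow> real"
  shows "(\<Sum>i = 1..m. g i) = (\<Sum>i\<le>m. g i) - g 0"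
  using sum.atLeast_Suc_atMost[of 0 m g] by (simp add: atLeast0AtMost)

lemma sum_abs_dist_symmetric:
  fixes f :: "real \<Rightarrow> real"
  shows "(\<Sum>j = 0..2 * m. f \<bar>real m - real j\<bar>) = 2 * (\<Sum>i\<le>m. f (real i)) - f 0"
proof -
  have "(\<Sum>j = 0..2 * m. f \<bar>real m - real j\<bar>)
      = (\<Sum>j = 0..m. f \<bar>real m - real j\<bar>) + (\<Sum>j = m + 1..2 * m. f \<bar>real m - real j\<bar>)"
    by (rule sum_split_halves)
  also have "(\<Sum>j = 0..m. f \<bar>real m - real j\<bar>) = (\<Sum>j = 0..m. f \<bar>real m - real (m + 0 - j)\<bar>)"
    by (rule sum.atLeastAtMost_rev)
  also have "\<dots> = (\<Sum>i\<le>m. f (real i))"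
    unfolding atLeast0AtMost by (rule sum.cong) (auto simp: of_nat_diff)
  also have "(\<Sum>j = m + 1..2 * m. f \<bar>real m - real j\<bar>) = (\<Sum>i = 1..m. f (real i))"
    unfolding sum_upper_half_shift by (rule sum.cong) auto
  finally show ?thesis
    using sum_atLeast1_atMost_eq[of "\<lambda>i. f (real i)" m] by simp
qed

lemma sum_abs_dist_amj:
  fixes f :: "real \<Rightarrow> real"
  shows "(\<Sum>j = 0..2 * m. f \<bar>real m - real j\<bar> * amj m j) = (\<Sum>i\<le>m. f (real i) * real i)"
proof -
  have "(\<Sum>j = 0..2 * m. f \<bar>real m - real j\<bar> * amj m j)
      = (\<Sum>j = 0..m. f \<bar>real m - real j\<bar> * amj m j)
        + (\<Sum>j = m + 1..2 * m. f \<bar>real m - real j\<bar> * amj m j)"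
    by (rule sum_split_halves)
  also have "(\<Sum>j = 0..m. f \<bar>real m - real j\<bar> * amj m j) = 0"
    by (rule sum.neutral) (auto simp: amj_def)
  also have "(\<Sum>j = m + 1..2 * m. f \<bar>real m - real j\<bar> * amj m j) = (\<Sum>i = 1..m. f (real i) * real i)"
    unfolding sum_upper_half_shift by (rule sum.cong) (auto simp: amj_def)
  finally show ?thesis
    using sum_atLeast1_atMost_eq[of "\<lambda>i. f (real i) * real i" m] by simp
qed

lemma tendsto_zeroth_moment:
  fixes r :: real
  assumes "r \<ge> 1"
  shows "(\<lambda>m. (\<Sum>j = 0..2 * m. (real m * r - \<bar>real m - real j\<bar>) ^ k) / real m ^ Suc k)
           \<longlonglongrightarrow> 2 * power_integral r k"
proof -
  have "(\<lambda>m. 2 * (power_sum r k m / real m ^ Suc k) - r ^ k / real m)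
          \<longlonglongrightarrow> 2 * power_integral r k - 0"
    by (intro tendsto_diff tendsto_mult tendsto_const tendsto_power_sum assms lim_const_over_n)
  moreover have "2 * (power_sum r k m / real m ^ Suc k) - r ^ k / real m
      = (\<Sum>j = 0..2 * m. (real m * r - \<bar>real m - real j\<bar>) ^ k) / real m ^ Suc k" if "m > 0" for m
    using that sum_abs_dist_symmetric[of "\<lambda>x. (real m * r - x) ^ k" m]
    by (simp add: power_sum_def power_mult_distrib diff_divide_distrib)
  ultimately show ?thesis
    by (simp add: Lim_transform_eventually[OF _ eventually_mono[OF eventually_gt_at_top[of 0]]])
qed

lemma tendsto_first_moment:
  fixes r :: real
  assumes "r \<ge> 1"
  shows "(\<lambda>m. (\<Sum>j = 0..2 * m. (real m * r - \<bar>real m - real j\<bar>) ^ k * amj m j) / real m ^ Suc (Suc k))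
           \<longlonglongrightarrow> r * power_integral r k - power_integral r (Suc k)"
proof -
  have "(\<lambda>m. r * (power_sum r k m / real m ^ Suc k) - power_sum r (Suc k) m / real m ^ Suc (Suc k))
          \<longlonglongrightarrow> r * power_integral r k - power_integral r (Suc k)"
    by (intro tendsto_diff tendsto_mult tendsto_const tendsto_power_sum assms)
  moreover have "r * (power_sum r k m / real m ^ Suc k) - power_sum r (Suc k) m / real m ^ Suc (Suc k)
      = (\<Sum>j = 0..2 * m. (real m * r - \<bar>real m - real j\<bar>) ^ k * amj m j) / real m ^ Suc (Suc k)"
    if "m > 0" for m
  proof -
    have "(\<Sum>j = 0..2 * m. (real m * r - \<bar>real m - real j\<bar>) ^ k * amj m j)
        = (\<Sum>i\<le>m. real m * r * (real m * r - real i) ^ k - (real m * r - real i) ^ Suc k)"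
      unfolding sum_abs_dist_amj[of "\<lambda>x. (real m * r - x) ^ k"]
      by (rule sum.cong) (simp_all add: algebra_simps)
    also have "\<dots> = real m * r * power_sum r k m - power_sum r (Suc k) m"
      by (simp add: power_sum_def sum_subtractf sum_distrib_left)
    finally show ?thesis
      using that by (simp add: diff_divide_distrib)
  qed
  ultimately show ?thesis
    by (simp add: Lim_transform_eventually[OF _ eventually_mono[OF eventually_gt_at_top[of 0]]])
qed

lemma eventually_abs_diff_le_power:
  fixes f :: "real \<Rightarrow> real"
  assumes "((\<lambda>t. f t / t ^ k) \<longlongrightarrow> c) at_top" and "eps > 0"
  shows "\<forall>\<^sub>F t in at_top. \<bar>f t - c * t ^ k\<bar> \<le> eps * t ^ k"
  using tendstoD[OF assms] eventually_gt_at_top[of 0]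
proof eventually_elim
  case (elim t)
  have "f t - c * t ^ k = (f t / t ^ k - c) * t ^ k"
    using elim(2) by (simp add: left_diff_distrib)
  then have "\<bar>f t - c * t ^ k\<bar> = \<bar>f t / t ^ k - c\<bar> * t ^ k"
    using elim(2) by (simp add: abs_mult)
  also have "\<dots> \<le> eps * t ^ k"
    using elim by (intro mult_right_mono) (simp_all add: dist_real_def)
  finally show ?case .
qed

lemma tendsto_weighted_sum_asymptotic:
  fixes f :: "real \<Rightarrow> real" and x w :: "'a \<Rightarrow> 'b \<Rightarrow> real"
  assumes f: "((\<lambda>t. f t / t ^ k) \<longlongrightarrow> c) at_top"
    and x: "\<And>T. \<forall>\<^sub>F m in F. \<forall>j\<in>A m. x m j \<ge> T"
    and w: "\<And>m j. j \<in> A m \<Longrightarrow> w m j \<ge> 0"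
    and D: "\<forall>\<^sub>F m in F. D m > 0"
    and P: "((\<lambda>m. (\<Sum>j\<in>A m. x m j ^ k * w m j) / D m) \<longlongrightarrow> L) F"
  shows "((\<lambda>m. (\<Sum>j\<in>A m. f (x m j) * w m j) / D m) \<longlongrightarrow> c * L) F"
proof -
  define Pm where "Pm m = (\<Sum>j\<in>A m. x m j ^ k * w m j) / D m" for m
  define Qm where "Qm m = (\<Sum>j\<in>A m. f (x m j) * w m j) / D m" for m
  have "((\<lambda>m. Qm m - c * Pm m) \<longlongrightarrow> 0) F"
  proof (rule tendstoI)
    fix e :: real assume "e > 0"
    define eps where "eps = e / (\<bar>L\<bar> + 1)"
    have eps: "eps > 0" "eps * (\<bar>L\<bar> + 1) = e"
      using \<open>e > 0\<close> by (simp_all add: eps_def)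
    obtain T where T: "\<And>t. t \<ge> T \<Longrightarrow> \<bar>f t - c * t ^ k\<bar> \<le> eps * t ^ k"
      using eventually_abs_diff_le_power[OF f eps(1)] unfolding eventually_at_top_linorder by blast
    show "\<forall>\<^sub>F m in F. dist (Qm m - c * Pm m) 0 < e"
      using x[of T] D tendstoD[OF P[folded Pm_def] zero_less_one]
    proof eventually_elim
      case (elim m)
      have "\<bar>(\<Sum>j\<in>A m. f (x m j) * w m j) - c * (\<Sum>j\<in>A m. x m j ^ k * w m j)\<bar>
          \<le> (\<Sum>j\<in>A m. \<bar>f (x m j) - c * x m j ^ k\<bar> * w m j)"
        unfolding sum_distrib_left sum_subtractf[symmetric]
      proof (rule order_trans[OF sum_abs sum_mono])
        fix j assume "j \<in> A m"
        have "f (x m j) * w m j - c * (x m j ^ k * w m j) = (f (x m j) - c * x m j ^ k) * w m j"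
          by (simp add: algebra_simps)
        then show "\<bar>f (x m j) * w m j - c * (x m j ^ k * w m j)\<bar>
            \<le> \<bar>f (x m j) - c * x m j ^ k\<bar> * w m j"
          using w[OF \<open>j \<in> A m\<close>] by (simp add: abs_mult)
      qed
      also have "\<dots> \<le> eps * (\<Sum>j\<in>A m. x m j ^ k * w m j)"
        unfolding sum_distrib_left mult.assoc[symmetric]
        using elim(1) w by (auto intro!: sum_mono mult_right_mono T)
      finally have "\<bar>Qm m - c * Pm m\<bar> \<le> eps * Pm m"
        using elim(2) by (simp add: Qm_def Pm_def diff_divide_distrib[symmetric] divide_right_mono)
      also have "\<dots> < eps * (\<bar>L\<bar> + 1)"
        using elim(3) eps(1) by (simp add: dist_real_def)
      finally show ?case by (simp add: eps(2))
    qed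
  qed
  then have "((\<lambda>m. (Qm m - c * Pm m) + c * Pm m) \<longlongrightarrow> 0 + c * L) F"
    by (intro tendsto_add tendsto_mult tendsto_const) (simp_all add: Pm_def P)
  then show ?thesis by (simp add: Qm_def)
qed

lemma eventually_dist_args_ge:
  fixes r T :: real
  assumes "r > 1"
  shows "\<forall>\<^sub>F m in sequentially. \<forall>j\<in>{0..2 * m}. real m * r - \<bar>real m - real j\<bar> \<ge> T"
proof -
  have "\<forall>\<^sub>F m in sequentially. real m \<ge> T / (r - 1)"
    using filterlim_real_sequentially unfolding filterlim_at_top by blast
  then show ?thesis
  proof eventually_elim
    case (elim m)
    have "T \<le> real m * (r - 1)"
      using elim assms by (simp add: divide_le_eq mult.commute)
    also have "real m * (r - 1) \<le> real m * r - \<bar>real m - real j\<bar>" if "j \<in> {0..2 * m}" for j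
      using that by (auto simp: algebra_simps)
    finally show ?case by blast
  qed
qed

lemma tendsto_Nmj_moment:
  fixes h :: "real \<Rightarrow> nat" and w :: "nat \<Rightarrow> nat \<Rightarrow> real"
  assumes h: "((\<lambda>t. real (h t) / t ^ k) \<longlongrightarrow> c) at_top" and "r > 1"
    and w: "\<And>m j. w m j \<ge> 0"
    and P: "(\<lambda>m. (\<Sum>j = 0..2 * m. (real m * r - \<bar>real m - real j\<bar>) ^ k * w m j) / real m ^ q)
              \<longlonglongrightarrow> L"
  shows "(\<lambda>m. (\<Sum>j = 0..2 * m. real (Nmj h r m j) * w m j) / real m ^ q) \<longlonglongrightarrow> c * L"
proof -
  have "(\<lambda>m. (\<Sum>j = 0..2 * m. real (h (real m * r - \<bar>real m - real j\<bar>)) * w m j) / real m ^ q)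
          \<longlonglongrightarrow> c * L"
    using eventually_gt_at_top[of "0::nat"]
    by (intro tendsto_weighted_sum_asymptotic[where f = "\<lambda>t. real (h t)", OF h
          eventually_dist_args_ge[OF \<open>r > 1\<close>] w _ P]) (auto elim: eventually_mono)
  moreover have "(\<Sum>j = 0..2 * m. real (Nmj h r m j) * w m j)
      = (\<Sum>j = 0..2 * m. real (h (real m * r - \<bar>real m - real j\<bar>)) * w m j)" for m
    by (rule sum.cong) (simp_all add: Nmj_def)
  ultimately show ?thesis by simp
qed

lemma am_eq_moment_ratio:
  assumes "m > 0"
  shows "am h r m = ((\<Sum>j = 0..2 * m. real (Nmj h r m j) * amj m j) / real m ^ Suc (Suc k))
                    / ((\<Sum>j = 0..2 * m. real (Nmj h r m j)) / real m ^ Suc k)"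
proof -
  have Nm: "real (Nm h r m) = (\<Sum>j = 0..2 * m. real (Nmj h r m j))"
    by (simp add: Nm_def)
  show ?thesis
  proof (cases "Nm h r m = 0")
    case True
    then show ?thesis by (simp add: am_def flip: Nm)
  next
    case False
    then have "(\<Sum>j = 0..2 * m. real (Nmj h r m j)) \<noteq> 0" by (simp flip: Nm)
    then show ?thesis unfolding am_def Nm using assms by (simp add: field_simps)
  qed
qed

lemma tendsto_am_moment_ratio:
  assumes N0: "(\<lambda>m. (\<Sum>j = 0..2 * m. real (Nmj h r m j)) / real m ^ Suc k) \<longlonglongrightarrow> A"
    and N1: "(\<lambda>m. (\<Sum>j = 0..2 * m. real (Nmj h r m j) * amj m j) / real m ^ Suc (Suc k))
              \<longlonglongrightarrow> B"
    and "A \<noteq> 0"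
  shows "am h r \<longlonglongrightarrow> B / A"
proof -
  have "\<forall>\<^sub>F m in sequentially.
      ((\<Sum>j = 0..2 * m. real (Nmj h r m j) * amj m j) / real m ^ Suc (Suc k))
        / ((\<Sum>j = 0..2 * m. real (Nmj h r m j)) / real m ^ Suc k) = am h r m"
    using eventually_gt_at_top[of "0::nat"] by eventually_elim (rule am_eq_moment_ratio[symmetric])
  then show ?thesis
    using tendsto_divide[OF N1 N0 \<open>A \<noteq> 0\<close>] by (rule Lim_transform_eventually[rotated])
qed

lemma a_lim_eq_moment_ratio:
  assumes "r > 1"
  shows "a_lim (Suc k) r = (r * power_integral r k - power_integral r (Suc k)) / (2 * power_integral r k)"
proof -
  define X Y where "X = r ^ Suc k" and "Y = (r - 1) ^ Suc k"
  have "X - Y \<noteq> 0"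
    using power_integral_pos[OF assms, of k] by (auto simp: power_integral_def X_def Y_def)
  moreover have "power_integral r k = (X - Y) / (real k + 1)"
    and "power_integral r (Suc k) = (r * X - (r - 1) * Y) / (real k + 2)"
    and "a_lim (Suc k) r = (r * X - (r - 1) * Y - (real k + 2) * Y) / (2 * (real k + 2) * (X - Y))"
    by (simp_all add: power_integral_def a_lim_def X_def Y_def add.commute)
  ultimately show ?thesis
    by (simp only:) (simp add: divide_simps, simp add: algebra_simps)
qed

theorem mainTheorem9:
  fixes h :: "real \<Rightarrow> nat" and n :: nat and r c :: real
  assumes "n \<ge> 2"
    and "r \<in> \<rat>" and "r > 1"
    and "c > 0"
    and "((\<lambda>t. real (h t) / t ^ (n - 1)) \<longlongrightarrow> c) at_top"
  shows "(\<lambda>m. am h r m) \<longlonglongrightarrow> a_lim n r"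
proof -
  obtain k where n: "n = Suc k" using assms(1) by (cases n) auto
  have h: "((\<lambda>t. real (h t) / t ^ k) \<longlongrightarrow> c) at_top" using assms(5) by (simp add: n)
  have r: "r \<ge> 1" using assms(3) by simp
  have N0: "(\<lambda>m. (\<Sum>j = 0..2 * m. real (Nmj h r m j)) / real m ^ Suc k)
              \<longlonglongrightarrow> c * (2 * power_integral r k)"
    using tendsto_Nmj_moment[OF h assms(3), of "\<lambda>_ _. 1" "Suc k"] tendsto_zeroth_moment[OF r, of k]
    by simp
  have N1: "(\<lambda>m. (\<Sum>j = 0..2 * m. real (Nmj h r m j) * amj m j) / real m ^ Suc (Suc k))
              \<longlonglongrightarrow> c * (r * power_integral r k - power_integral r (Suc k))"
    by (rule tendsto_Nmj_moment[OF h assms(3) _ tendsto_first_moment[OF r]]) (simp add: amj_def)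
  have "am h r \<longlonglongrightarrow>
      c * (r * power_integral r k - power_integral r (Suc k)) / (c * (2 * power_integral r k))"
    using power_integral_pos[OF assms(3), of k] assms(4) by (intro tendsto_am_moment_ratio[OF N0 N1]) simp
  then show ?thesis
    using assms(4) by (simp add: n a_lim_eq_moment_ratio[OF assms(3)])
qed

end
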